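(* Let $\mathbf C$ be a category of coframes and $(L,\lim_L)$ a convergence $\mathbf C$-object. Then $\lim_{T(L)}$, defined by $\lim_{T(L)}\mathcal F=\bigwedge\{c: c\in\mathcal F^\#\cap C(L)\}$, is the finest topological convergence structure on $L$ that is coarser than $\lim_L$: it is topological, $\lim_L\mathcal F\le\lim_{T(L)}\mathcal F$ for all $\mathcal F$, and every topological convergence structure $\lim$ on $L$ with $\lim_L\le\lim$ pointwise satisfies $\lim_{T(L)}\le\lim$ pointwise.
   Context: A category of coframes has coframes as objects and coframe morphisms. A filter on $L$ is a non-empty upward-closed subset closed under binary meets ($L$ allowed); $\mathbb F L$ is the set of filters. A convergence structure on $L$ is a monotone map $\lim:\mathbb F L\to L$; a convergence $\mathbf C$-object is a $\mathbf C$-object with a convergence structure. For $\mathcal A\subseteq L$, $\mathcal A^\#=\{\ell: a\wedge\ell\ne\bot\ \forall a\in\mathcal A\}$. For a convergence structure $\lim$, an element $c$ is closed if it is complemented and $\lim\mathcal F\le c$ for every filter $\mathcal F$ with $c\in\mathcal F^\#$; $C(\lim)$ (written $C(L)$ for $\lim_L$) is the set of closed elements. A convergence structure $\lim$ is topological if $\lim\mathcal F=\bigwedge\{c:c\in\mathcal F^\#\cap C(\lim)\}$ for every filter $\mathcal F$. Convergence structures are ordered pointwise; $\lim\le\lim'$ means $\lim$ is finer (and $\lim'$ coarser). *)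

theory Defs
  imports Main
begin

class coframe = complete_lattice +
  assumes sup_Inf_coframe: "sup a (Inf S) = (INF s\<in>S. sup a s)"

text \<open>Filters on L: non-empty, upward closed, closed under binary meets (L itself allowed).\<close>
definition is_lfilter :: "'a::coframe set \<Rightarrow> bool" where
  "is_lfilter F \<longleftrightarrow> F \<noteq> {} \<and> (\<forall>a b. a \<in> F \<and> a \<le> b \<longrightarrow> b \<in> F)
     \<and> (\<forall>a\<in>F. \<forall>b\<in>F. inf a b \<in> F)"

text \<open>A convergence structure: a monotone map from filters (ordered by inclusion) to L.
  It is represented as a function on all subsets; only its values on filters matter.\<close>
definition convergence_structure :: "('a::coframe set \<Rightarrow> 'a) \<Rightarrow> bool" where
  "convergence_structure lim \<longleftrightarrow>
     (\<forall>F G. is_lfilter F \<and> is_lfilter G \<and> F \<subseteq> G \<longrightarrow> lim F \<le> lim G)"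

definition sharp :: "'a::coframe set \<Rightarrow> 'a set" where
  "sharp A = {l. \<forall>a\<in>A. inf a l \<noteq> bot}"

definition complemented :: "'a::coframe \<Rightarrow> bool" where
  "complemented c \<longleftrightarrow> (\<exists>d. inf c d = bot \<and> sup c d = top)"

definition closed_elems :: "('a::coframe set \<Rightarrow> 'a) \<Rightarrow> 'a set" where
  "closed_elems lim = {c. complemented c \<and>
      (\<forall>F. is_lfilter F \<and> c \<in> sharp F \<longrightarrow> lim F \<le> c)}"

definition topological :: "('a::coframe set \<Rightarrow> 'a) \<Rightarrow> bool" where
  "topological lim \<longleftrightarrow> convergence_structure lim \<and>
     (\<forall>F. is_lfilter F \<longrightarrow> lim F = Inf (sharp F \<inter> closed_elems lim))"

definition limT :: "('a::coframe set \<Rightarrow> 'a) \<Rightarrow> 'a set \<Rightarrow> 'a" where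
  "limT lim F = Inf {c. c \<in> sharp F \<inter> closed_elems lim}"

end

theory Submission
  imports Defs
begin

text \<open>Coarsening a convergence structure can only remove closed elements. Since every closed
  element c of lim bounds limT lim F whenever c meshes with F, limT lim is coarser than lim
  and still has all of its closed elements; hence C(limT lim) = C(lim), which says exactly that
  limT lim is topological. A topological lim' coarser than lim is the meet over the smaller set
  of closed elements C(lim') \<subseteq> C(lim), so it lies above limT lim.\<close>

lemma sharp_antimono: "F \<subseteq> G \<Longrightarrow> sharp G \<subseteq> sharp F"
  unfolding sharp_def by auto

lemma closed_elems_antimono:
  assumes "\<And>F. is_lfilter F \<Longrightarrow> lim F \<le> lim' F"
  shows "closed_elems lim' \<subseteq> closed_elems lim"
  using assms unfolding closed_elems_def by (auto intro: order_trans)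

lemma limT_eq: "limT lim F = Inf (sharp F \<inter> closed_elems lim)"
  unfolding limT_def by (simp add: Int_def)

lemma le_limT: "is_lfilter F \<Longrightarrow> lim F \<le> limT lim F"
  unfolding limT_def closed_elems_def by (auto intro!: Inf_greatest)

lemma closed_elems_limT: "closed_elems (limT lim) = closed_elems lim"
proof
  show "closed_elems (limT lim) \<subseteq> closed_elems lim"
    by (rule closed_elems_antimono) (rule le_limT)
  show "closed_elems lim \<subseteq> closed_elems (limT lim)"
    unfolding closed_elems_def[of "limT lim"]
    by (auto simp: limT_def closed_elems_def intro!: Inf_lower)
qed

lemma convergence_structure_limT: "convergence_structure (limT lim)"
  unfolding convergence_structure_def limT_eq
  by (auto intro!: Inf_superset_mono dest: sharp_antimono)

lemma topological_limT: "topological (limT lim)"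
  unfolding topological_def
  by (simp add: convergence_structure_limT closed_elems_limT limT_eq)

lemma limT_le_topological:
  assumes "topological lim'" and "\<And>G. is_lfilter G \<Longrightarrow> lim G \<le> lim' G" and "is_lfilter F"
  shows "limT lim F \<le> lim' F"
proof -
  have "closed_elems lim' \<subseteq> closed_elems lim"
    using assms(2) by (rule closed_elems_antimono)
  then have "limT lim F \<le> Inf (sharp F \<inter> closed_elems lim')"
    unfolding limT_eq by (intro Inf_superset_mono) auto
  also have "\<dots> = lim' F"
    using assms(1,3) unfolding topological_def by simp
  finally show ?thesis .
qed

theorem mainTheorem18:
  fixes limL :: "'a::coframe set \<Rightarrow> 'a"
  assumes "convergence_structure limL"
  shows "topological (limT limL)
    \<and> (\<forall>F. is_lfilter F \<longrightarrow> limL F \<le> limT limL F)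
    \<and> (\<forall>lim. topological lim \<and> (\<forall>F. is_lfilter F \<longrightarrow> limL F \<le> lim F)
              \<longrightarrow> (\<forall>F. is_lfilter F \<longrightarrow> limT limL F \<le> lim F))"
  using topological_limT le_limT limT_le_topological by blast

end
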